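(* Let $q$ be a prime power and let $n,k,r$ be integers with $n<q$, $0<r<k\le n$, $r\mid k$, $(r+1)\mid n$ and $(r+1)\mid(q-1)$. Let $t=n-k-k/r$ and assume $t\ge 0$. Then there exists a linear $[n,k,t+2]$ code over $\mathbb F_q$ with addition based repair and all-symbol locality $r$. Since every linear $[n,k,d]$ code with information locality $r$ satisfies $d\le n-\lceil k/r\rceil-k+2=t+2$, this code is optimal in terms of distance.
   Context: For a linear $[n,k,d]$ code $\mathcal C$ over $\mathbb F_q$ (length $n$, dimension $k$, minimum distance $d$), the coordinates are called nodes and are indexed by $[n]=\{1,\dots,n\}$. A node $i$ has locality $r_i$ if there is a repair set $J_i\subseteq[n]\setminus\{i\}$ of size $r_i$ and a function $\phi_i:\mathbb F_q^{r_i}\to\mathbb F_q$ such that $\phi_i$ applied to $(c_j)_{j\in J_i}$ equals $c_i$ for all $\mathbf c\in\mathcal C$. $\mathcal C$ has all-symbol locality $r$ if every node has locality at most $r$. Information locality $r$ means that the information nodes have locality at most $r$. $\mathcal C$ has addition based repair if every node $i$ has such a repair set $J_i$ with repair function $\phi_i\big((c_j)_{j\in J_i}\big)=-\sum_{j\in J_i}c_j$, i.e. $c_i+\sum_{j\in J_i}c_j=0$ for all $\mathbf c\in\mathcal C$. *)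

theory Defs
  imports Complex_Main "HOL-Library.Function_Algebras"
begin

(* Words of length n over the field 'a are represented as functions nat => 'a;
   the n coordinates (nodes) are 0,...,n-1 and all other coordinates are 0. *)

definition scale_vec :: "'a::field \<Rightarrow> (nat \<Rightarrow> 'a) \<Rightarrow> (nat \<Rightarrow> 'a)" where
  "scale_vec a v = (\<lambda>i. a * v i)"

definition words :: "nat \<Rightarrow> (nat \<Rightarrow> 'a::field) set" where
  "words n = {c. \<forall>i. n \<le> i \<longrightarrow> c i = 0}"

definition linear_code :: "nat \<Rightarrow> (nat \<Rightarrow> 'a::field) set \<Rightarrow> bool" where
  "linear_code n C \<longleftrightarrow> C \<subseteq> words n \<and> module.subspace scale_vec C"

definition code_dim :: "(nat \<Rightarrow> 'a::field) set \<Rightarrow> nat" where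
  "code_dim C = vector_space.dim scale_vec C"

definition hamming_dist :: "nat \<Rightarrow> (nat \<Rightarrow> 'a) \<Rightarrow> (nat \<Rightarrow> 'a) \<Rightarrow> nat" where
  "hamming_dist n c c' = card {i. i < n \<and> c i \<noteq> c' i}"

definition min_distance :: "nat \<Rightarrow> (nat \<Rightarrow> 'a) set \<Rightarrow> nat \<Rightarrow> bool" where
  "min_distance n C d \<longleftrightarrow>
     (\<exists>c\<in>C. \<exists>c'\<in>C. c \<noteq> c' \<and> hamming_dist n c c' = d) \<and>
     (\<forall>c\<in>C. \<forall>c'\<in>C. c \<noteq> c' \<longrightarrow> d \<le> hamming_dist n c c')"

definition node_locality :: "nat \<Rightarrow> (nat \<Rightarrow> 'a::zero) set \<Rightarrow> nat \<Rightarrow> nat \<Rightarrow> bool" where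
  "node_locality n C i r \<longleftrightarrow>
     (\<exists>J. J \<subseteq> {..<n} - {i} \<and> card J \<le> r \<and>
        (\<exists>\<phi> :: (nat \<Rightarrow> 'a) \<Rightarrow> 'a. \<forall>c\<in>C. \<phi> (\<lambda>j. if j \<in> J then c j else 0) = c i))"

definition all_symbol_locality :: "nat \<Rightarrow> (nat \<Rightarrow> 'a::zero) set \<Rightarrow> nat \<Rightarrow> bool" where
  "all_symbol_locality n C r \<longleftrightarrow> (\<forall>i<n. node_locality n C i r)"

definition addition_based_repair :: "nat \<Rightarrow> (nat \<Rightarrow> 'a::field) set \<Rightarrow> nat \<Rightarrow> bool" where
  "addition_based_repair n C r \<longleftrightarrow>
     (\<forall>i<n. \<exists>J. J \<subseteq> {..<n} - {i} \<and> card J \<le> r \<and>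
        (\<forall>c\<in>C. c i + (\<Sum>j\<in>J. c j) = 0))"

end

theory Submission
  imports Defs "HOL-Computational_Algebra.Polynomial"
begin

text \<open>
  Put \<open>N = r + 1\<close> and \<open>m = k / r\<close>. Since \<open>N\<close> divides \<open>q - 1\<close>, the group \<open>H\<close> of \<open>N\<close>-th roots
  of unity has exactly \<open>N\<close> elements, so \<open>n\<close> nonzero evaluation points can be chosen as a union of
  \<open>n / N\<close> cosets \<open>a H\<close>. A codeword is the list of values \<open>x g(x)\<close> at these points, where \<open>g\<close> runs
  over the polynomials whose exponents \<open>e < m N\<close> satisfy \<open>N \<nmid> e + 1\<close>; there are \<open>m r = k\<close> such
  exponents. As \<open>\<Sum>\<^sub>h\<^sub>\<in>\<^sub>H h\<^sup>w = 0\<close> for \<open>N \<nmid> w\<close>, the \<open>N\<close> symbols of a coset sum to zero,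
  which is an addition based repair with \<open>r\<close> helpers. Since \<open>deg g \<le> m N - 2\<close>, a nonzero codeword
  has weight at least \<open>n - m N + 2 = t + 2\<close>; the product of \<open>x\<^sup>N - a\<^sup>N\<close> over \<open>m - 1\<close> cosets and
  of \<open>x - \<beta>\<close> over \<open>N - 2\<close> points of another coset has admissible exponents and attains this.
\<close>

section \<open>Roots of unity and their cosets in a finite field\<close>

lemma power_card_minus_one_eq_one:
  fixes x :: "'a::{finite,field}"
  assumes "x \<noteq> 0"
  shows "x ^ (card (UNIV :: 'a set) - 1) = 1"
proof -
  have "x ^ (card (UNIV :: 'a set) - 1) * (\<Prod>y\<in>UNIV - {0}. y) = (\<Prod>y\<in>UNIV - {0::'a}. x * y)"
    by (simp add: prod.distrib card_Diff_singleton)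
  also have "\<dots> = (\<Prod>y\<in>UNIV - {0}. y)"
    by (rule prod.reindex_bij_witness[of _ "\<lambda>y. y / x" "\<lambda>y. x * y"]) (use assms in auto)
  finally show ?thesis
    by simp
qed

lemma card_roots_of_unity_le:
  assumes "N \<ge> 1"
  shows "card {h::'a::idom. h ^ N = 1} \<le> N"
proof -
  let ?f = "monom (1::'a) N - 1"
  have "coeff ?f N = 1"
    using assms by simp
  then have "?f \<noteq> 0"
    by (metis coeff_0 zero_neq_one)
  moreover have "degree ?f \<le> N"
    by (rule degree_diff_le) (auto simp: degree_monom_le)
  moreover have "{h::'a. h ^ N = 1} = {x. poly ?f x = 0}"
    by (auto simp: poly_monom)
  ultimately show ?thesis
    using card_poly_roots_bound[of ?f] by simp
qed

definition nonzero_powers :: "nat \<Rightarrow> 'a::field set" where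
  "nonzero_powers N = (\<lambda>a. a ^ N) ` (UNIV - {0})"

lemma power_fiber_eq_image:
  fixes a :: "'a::field"
  assumes "a \<noteq> 0"
  shows "{b. b ^ N = a ^ N} = (\<lambda>h. a * h) ` {h. h ^ N = 1}"
proof (intro set_eqI iffI)
  fix b assume "b \<in> {b. b ^ N = a ^ N}"
  then have "(b / a) ^ N = 1" "b = a * (b / a)"
    using assms by (auto simp: power_divide)
  then show "b \<in> (\<lambda>h. a * h) ` {h. h ^ N = 1}"
    by blast
qed (auto simp: power_mult_distrib)

lemma card_power_fiber:
  fixes a :: "'a::field"
  assumes "a \<noteq> 0"
  shows "card {b. b ^ N = a ^ N} = card {h::'a. h ^ N = 1}"
  unfolding power_fiber_eq_image[OF assms]
  by (rule card_image) (use assms in \<open>auto simp: inj_on_def\<close>)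

lemma card_power_preimage:
  fixes Y :: "'a::{finite,field} set"
  assumes "Y \<subseteq> nonzero_powers N"
  shows "card {b. b ^ N \<in> Y} = card Y * card {h::'a. h ^ N = 1}"
proof -
  have "card {b. b ^ N \<in> Y} = card (\<Union>y\<in>Y. {b. b ^ N = y})"
    by (rule arg_cong[where f = card]) auto
  also have "\<dots> = (\<Sum>y\<in>Y. card {b. b ^ N = y})"
    by (rule card_UN_disjoint) auto
  also have "\<dots> = (\<Sum>y\<in>Y. card {h::'a. h ^ N = 1})"
    using assms card_power_fiber by (intro sum.cong) (auto simp: nonzero_powers_def)
  finally show ?thesis
    by simp
qed

lemma power_preimage_nonzero_powers:
  assumes "N > 0"
  shows "{b::'a::field. b ^ N \<in> nonzero_powers N} = UNIV - {0}"
  using assms by (auto simp: nonzero_powers_def power_0_left)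

lemma card_roots_of_unity:
  assumes "N \<ge> 1" and "N dvd card (UNIV :: 'a::{finite,field} set) - 1"
  shows "card {h::'a. h ^ N = 1} = N"
proof (rule antisym)
  show "card {h::'a. h ^ N = 1} \<le> N"
    using card_roots_of_unity_le assms(1) by blast
  txt \<open>\<open>x \<mapsto> x\<^sup>N\<close> maps the \<open>N u\<close> nonzero elements onto \<open>u\<close>-th roots of unity, with the cosets of
    the \<open>N\<close>-th roots of unity as fibres.\<close>
  obtain u where u: "card (UNIV :: 'a set) - 1 = N * u"
    using assms(2) by blast
  have "card {0::'a, 1} \<le> card (UNIV :: 'a set)"
    by (rule card_mono) auto
  then have "2 \<le> card (UNIV :: 'a set)"
    by simp
  then have "u \<ge> 1"
    using u by (cases u) auto
  have "nonzero_powers N \<subseteq> {y::'a. y ^ u = 1}"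
  proof
    fix y :: 'a assume "y \<in> nonzero_powers N"
    then obtain a :: 'a where "a \<noteq> 0" "y = a ^ N"
      by (auto simp: nonzero_powers_def)
    then show "y \<in> {y. y ^ u = 1}"
      using power_card_minus_one_eq_one[of a] unfolding u by (simp add: power_mult)
  qed
  then have "card (nonzero_powers N :: 'a set) \<le> card {y::'a. y ^ u = 1}"
    by (intro card_mono) simp_all
  also have "\<dots> \<le> u"
    using \<open>u \<ge> 1\<close> by (rule card_roots_of_unity_le)
  finally have "card (nonzero_powers N :: 'a set) \<le> u" .
  have "N * u = card (UNIV - {0::'a})"
    using u by (simp add: card_Diff_singleton)
  also have "\<dots> = card (nonzero_powers N :: 'a set) * card {h::'a. h ^ N = 1}"
    using card_power_preimage[of "nonzero_powers N :: 'a set" N]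
      power_preimage_nonzero_powers[of N, where 'a = 'a] assms(1)
    by simp
  also have "\<dots> \<le> u * card {h::'a. h ^ N = 1}"
    by (rule mult_le_mono1) fact
  finally show "N \<le> card {h::'a. h ^ N = 1}"
    using \<open>u \<ge> 1\<close> by (simp add: mult.commute)
qed

lemma card_nonzero_powers:
  assumes "N \<ge> 1" and "N dvd card (UNIV :: 'a::{finite,field} set) - 1"
  shows "card (nonzero_powers N :: 'a set) * N = card (UNIV :: 'a set) - 1"
proof -
  have "card (nonzero_powers N :: 'a set) * N = card {b::'a. b ^ N \<in> nonzero_powers N}"
    using card_power_preimage[of "nonzero_powers N :: 'a set" N] card_roots_of_unity[OF assms]
    by simp
  also have "\<dots> = card (UNIV - {0::'a})"
    using power_preimage_nonzero_powers[of N, where 'a = 'a] assms(1) by simp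
  finally show ?thesis
    by (simp add: card_Diff_singleton)
qed

lemma exists_evaluation_points:
  assumes "N \<ge> 1" and "N dvd card (UNIV :: 'a::{finite,field} set) - 1"
    and "N dvd n" and "n < card (UNIV :: 'a set)"
  obtains Ys :: "'a::{finite,field} set" and p where "Ys \<subseteq> nonzero_powers N" "bij_betw p {0..<n} {b. b ^ N \<in> Ys}"
proof -
  obtain s where s: "n = s * N"
    using assms(3) by (metis dvd_def mult.commute)
  have "s * N \<le> card (nonzero_powers N :: 'a set) * N"
    using card_nonzero_powers[OF assms(1,2)] assms(4) s by linarith
  then have "s \<le> card (nonzero_powers N :: 'a set)"
    using assms(1) by simp
  then obtain Ys :: "'a set" where Ys: "Ys \<subseteq> nonzero_powers N" "card Ys = s"
    by (rule obtain_subset_with_card_n)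
  then have "card {b::'a. b ^ N \<in> Ys} = n"
    using card_power_preimage[OF Ys(1)] card_roots_of_unity[OF assms(1,2)] s by simp
  then obtain p where "bij_betw p {0..<n} {b::'a. b ^ N \<in> Ys}"
    using ex_bij_betw_nat_finite[of "{b::'a. b ^ N \<in> Ys}"] by auto
  with Ys(1) show thesis
    by (rule that)
qed

lemma sum_roots_of_unity_power_eq_0:
  assumes "card {h::'a::{finite,field}. h ^ N = 1} = N" and "\<not> N dvd w"
  shows "(\<Sum>h\<in>{h::'a. h ^ N = 1}. h ^ w) = 0"
proof -
  let ?H = "{h::'a. h ^ N = 1}"
  have "N \<ge> 1"
    using assms(1) card_gt_0_iff[of ?H] by force
  txt \<open>Otherwise all of \<open>?H\<close> would be among the fewer than \<open>N\<close> roots of \<open>x\<^bsup>w mod N\<^esup> = 1\<close>.\<close>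
  obtain h0 where "h0 \<in> ?H" "h0 ^ w \<noteq> 1"
  proof (rule ccontr)
    assume "\<not> thesis"
    then have "\<forall>h\<in>?H. h ^ w = 1"
      using that by blast
    have "w mod N \<noteq> 0"
      using assms(2) by (simp add: dvd_eq_mod_eq_0)
    then have "w mod N \<ge> 1"
      by simp
    have "w mod N < N"
      using \<open>N \<ge> 1\<close> by simp
    have "?H \<subseteq> {h. h ^ (w mod N) = 1}"
    proof
      fix h assume "h \<in> ?H"
      have "h ^ w = (h ^ N) ^ (w div N) * h ^ (w mod N)"
        by (metis div_mult_mod_eq power_add power_mult mult.commute)
      then have "h ^ w = h ^ (w mod N)"
        using \<open>h \<in> ?H\<close> by simp
      then show "h \<in> {h. h ^ (w mod N) = 1}"
        using \<open>h \<in> ?H\<close> \<open>\<forall>h\<in>?H. h ^ w = 1\<close> by simp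
    qed
    then have "card ?H \<le> card {h::'a. h ^ (w mod N) = 1}"
      by (intro card_mono) simp_all
    also have "\<dots> < N"
      using card_roots_of_unity_le[OF \<open>w mod N \<ge> 1\<close>, where 'a = 'a] \<open>w mod N < N\<close> by linarith
    finally show False
      using assms(1) by simp
  qed
  have "h0 \<noteq> 0"
    using \<open>h0 \<in> ?H\<close> \<open>N \<ge> 1\<close> by (auto simp: power_0_left)
  then have inj: "inj_on (\<lambda>h. h0 * h) ?H"
    by (auto simp: inj_on_def)
  txt \<open>Multiplication by \<open>h0\<close> permutes \<open>?H\<close> and scales the sum by \<open>h0\<^sup>w \<noteq> 1\<close>.\<close>
  have "(\<lambda>h. h0 * h) ` ?H = ?H"
    by (rule endo_inj_surj[OF _ _ inj]) (use \<open>h0 \<in> ?H\<close> in \<open>auto simp: power_mult_distrib\<close>)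
  then have "(\<Sum>h\<in>?H. h ^ w) = (\<Sum>h\<in>?H. (h0 * h) ^ w)"
    using sum.reindex[OF inj, of "\<lambda>h. h ^ w"] by simp
  also have "\<dots> = h0 ^ w * (\<Sum>h\<in>?H. h ^ w)"
    by (simp add: power_mult_distrib sum_distrib_left)
  finally show ?thesis
    using \<open>h0 ^ w \<noteq> 1\<close> by (metis mult_cancel_right2)
qed

lemma sum_power_fiber_eq_0:
  fixes a :: "'a::{finite,field}"
  assumes "a \<noteq> 0" and "card {h::'a. h ^ N = 1} = N" and "\<not> N dvd w"
  shows "(\<Sum>b | b ^ N = a ^ N. b ^ w) = 0"
proof -
  have "(\<Sum>b | b ^ N = a ^ N. b ^ w) = (\<Sum>h | h ^ N = 1. (a * h) ^ w)"
    unfolding power_fiber_eq_image[OF assms(1)]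
    by (rule sum.reindex[unfolded comp_def]) (use assms(1) in \<open>auto simp: inj_on_def\<close>)
  also have "\<dots> = a ^ w * (\<Sum>h | h ^ N = 1. h ^ w)"
    by (simp add: power_mult_distrib sum_distrib_left)
  finally show ?thesis
    using sum_roots_of_unity_power_eq_0[OF assms(2,3)] by simp
qed

section \<open>Polynomials\<close>

lemma card_nonroots_ge:
  fixes g :: "'a::idom poly"
  assumes "g \<noteq> 0" and "inj_on x A" and "finite A"
  shows "card A - degree g \<le> card {i\<in>A. poly g (x i) \<noteq> 0}"
proof -
  let ?Z = "{i\<in>A. poly g (x i) = 0}"
  have "card ?Z = card (x ` ?Z)"
    by (intro card_image[symmetric] inj_on_subset[OF assms(2)]) auto
  also have "\<dots> \<le> card {y. poly g y = 0}"
    by (intro card_mono poly_roots_finite assms(1)) auto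
  also have "\<dots> \<le> degree g"
    by (rule card_poly_roots_bound[OF assms(1)])
  finally have "card ?Z \<le> degree g" .
  moreover have "{i\<in>A. poly g (x i) \<noteq> 0} = A - ?Z"
    by auto
  moreover have "card (A - ?Z) = card A - card ?Z"
    by (rule card_Diff_subset) (use assms(3) in auto)
  ultimately show ?thesis
    by simp
qed

lemma coeff_mult_neq_0E:
  fixes a b :: "'a::comm_semiring_0 poly"
  assumes "coeff (a * b) e \<noteq> 0"
  obtains i where "i \<le> e" "coeff a i \<noteq> 0" "coeff b (e - i) \<noteq> 0"
proof -
  have "(\<Sum>i\<le>e. coeff a i * coeff b (e - i)) \<noteq> 0"
    using assms by (simp add: coeff_mult)
  then obtain i where "i \<le> e" "coeff a i * coeff b (e - i) \<noteq> 0"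
    by (meson atMost_iff sum.neutral)
  with that show thesis
    by (metis mult_zero_left mult_zero_right)
qed

lemma dvd_coeff_prod:
  fixes F :: "'b \<Rightarrow> 'a::comm_semiring_1 poly"
  assumes "finite A" and "\<And>x e. x \<in> A \<Longrightarrow> coeff (F x) e \<noteq> 0 \<Longrightarrow> N dvd e"
    and "coeff (prod F A) e \<noteq> 0"
  shows "N dvd e"
  using assms
proof (induction A arbitrary: e rule: finite_induct)
  case empty
  then show ?case
    by (simp add: coeff_1 split: if_splits)
next
  case (insert x A)
  then have "coeff (F x * prod F A) e \<noteq> 0"
    by simp
  then obtain i where "i \<le> e" "coeff (F x) i \<noteq> 0" "coeff (prod F A) (e - i) \<noteq> 0"
    by (rule coeff_mult_neq_0E)
  then have "N dvd i" "N dvd e - i"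
    using insert by auto
  then show ?case
    using \<open>i \<le> e\<close> by (metis dvd_add le_add_diff_inverse)
qed

lemma degree_prod_le_card_mult:
  fixes F :: "'b \<Rightarrow> 'a::comm_semiring_1 poly"
  assumes "finite A" and "\<And>x. x \<in> A \<Longrightarrow> degree (F x) \<le> D"
  shows "degree (prod F A) \<le> card A * D"
proof -
  have "degree (prod F A) \<le> (\<Sum>x\<in>A. degree (F x))"
    using degree_prod_sum_le[OF assms(1)] by (simp add: o_def)
  also have "\<dots> \<le> (\<Sum>x\<in>A. D)"
    using assms(2) by (rule sum_mono)
  finally show ?thesis
    by simp
qed

lemma sum_monom_coeff_eq:
  assumes "finite E" and "\<And>e. coeff f e \<noteq> 0 \<Longrightarrow> e \<in> E"
  shows "(\<Sum>e\<in>E. monom (coeff f e) e) = f"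
  by (rule poly_eqI) (use assms in \<open>auto simp: coeff_sum coeff_monom\<close>)

interpretation vs: vector_space "scale_vec :: 'a::field \<Rightarrow> (nat \<Rightarrow> 'a) \<Rightarrow> (nat \<Rightarrow> 'a)"
  by unfold_locales (auto simp: scale_vec_def fun_eq_iff algebra_simps)

lemma sum_apply: "(\<Sum>x\<in>A. f x) i = (\<Sum>x\<in>A. f x i)"
  by (induction A rule: infinite_finite_induct) auto

lemma addition_based_repair_imp_all_symbol_locality:
  assumes "addition_based_repair n C r"
  shows "all_symbol_locality n C r"
  unfolding all_symbol_locality_def node_locality_def
proof (intro allI impI)
  fix i assume "i < n"
  then obtain J where J: "J \<subseteq> {..<n} - {i}" "card J \<le> r" "\<forall>c\<in>C. c i + (\<Sum>j\<in>J. c j) = 0"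
    using assms unfolding addition_based_repair_def by blast
  have "- (\<Sum>j\<in>J. if j \<in> J then c j else 0) = c i" if "c \<in> C" for c
  proof -
    have "(\<Sum>j\<in>J. if j \<in> J then c j else 0) = (\<Sum>j\<in>J. c j)"
      by (rule sum.cong) auto
    then show ?thesis
      using J(3) that by (metis add.commute add_eq_0_iff)
  qed
  with J(1,2) show "\<exists>J\<subseteq>{..<n} - {i}. card J \<le> r \<and>
      (\<exists>\<phi>. \<forall>c\<in>C. \<phi> (\<lambda>j. if j \<in> J then c j else 0) = c i)"
    by (intro exI[of _ J] conjI exI[of _ "\<lambda>v. - (\<Sum>j\<in>J. v j)"]) auto
qed

section \<open>The evaluation code\<close>

lemma obtain_subset_and_point_outside:
  assumes "Suc k \<le> card S"
  obtains T x where "T \<subseteq> S" "card T = k" "x \<in> S" "x \<notin> T"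
proof -
  have "k \<le> card S"
    using assms by simp
  then obtain T where T: "T \<subseteq> S" "card T = k" "finite T"
    by (rule obtain_subset_with_card_n)
  have "\<not> S \<subseteq> T"
  proof
    assume "S \<subseteq> T"
    with T(3) have "card S \<le> card T"
      by (rule card_mono)
    with T(2) assms show False
      by simp
  qed
  then obtain x where "x \<in> S" "x \<notin> T"
    by blast
  with T that show thesis
    by blast
qed

lemma mult_add_pred_mod_eq:
  fixes N :: nat
  assumes "N > 0"
  shows "(j * N + (N - 1)) mod N = N - 1"
  using assms by (simp only: mod_mult_self3) simp

locale lrc_construction =
  fixes n N m :: nat and Ys :: "'a::{finite,field} set" and p :: "nat \<Rightarrow> 'a"
  assumes N_ge_2: "N \<ge> 2" and m_ge_2: "m \<ge> 2" and mN_le_n: "m * N \<le> n"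
    and N_dvd_card: "N dvd card (UNIV :: 'a set) - 1"
    and Ys_nonzero_powers: "Ys \<subseteq> nonzero_powers N"
    and p_bij: "bij_betw p {0..<n} {b. b ^ N \<in> Ys}"
begin

text \<open>In the theorem \<open>N = r + 1\<close> and \<open>m = k / r\<close>; the nodes \<open>p 0, \<dots>, p (n - 1)\<close> enumerate the cosets
  of the \<open>N\<close>-th roots of unity lying over the \<open>N\<close>-th powers in \<open>Ys\<close>.\<close>

text \<open>\<open>exps\<close> is \<open>{e < m N. N \<nmid> e + 1}\<close>, so that the exponents of \<open>x \<cdot> message_poly u\<close> are
  exactly the numbers below \<open>m N\<close> not divisible by \<open>N\<close>.\<close>

definition exps :: "nat set" where
  "exps = {e. e < m * N \<and> e mod N \<noteq> N - 1}"

definition message_poly :: "(nat \<Rightarrow> 'a) \<Rightarrow> 'a poly" where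
  "message_poly u = (\<Sum>e\<in>exps. monom (u e) e)"

definition encode :: "(nat \<Rightarrow> 'a) \<Rightarrow> nat \<Rightarrow> 'a" where
  "encode u = (\<lambda>i. if i < n then p i * poly (message_poly u) (p i) else 0)"

definition basis_word :: "nat \<Rightarrow> nat \<Rightarrow> 'a" where
  "basis_word e = (\<lambda>i. if i < n then p i ^ Suc e else 0)"

definition code :: "(nat \<Rightarrow> 'a) set" where
  "code = vs.span (basis_word ` exps)"

lemma finite_exps: "finite exps"
  by (simp add: exps_def)

lemma exps_bound:
  assumes "e \<in> exps"
  shows "e + 2 \<le> m * N"
proof -
  have "m * N - 1 = (m - 1) * N + (N - 1)"
    using m_ge_2 N_ge_2 by (cases m) (auto simp: algebra_simps)
  then have "(m * N - 1) mod N = N - 1"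
    using N_ge_2 mult_add_pred_mod_eq[of N "m - 1"] by simp
  then have "e < m * N" "e \<noteq> m * N - 1"
    using assms by (auto simp: exps_def)
  then show ?thesis
    by linarith
qed

lemma not_dvd_Suc_exp: "e \<in> exps \<Longrightarrow> \<not> N dvd Suc e"
  using N_ge_2 mod_Suc[of e N] by (auto simp: exps_def dvd_eq_mod_eq_0 split: if_splits)

lemma card_exps: "card exps = m * (N - 1)"
proof -
  let ?R = "{e. e < m * N \<and> e mod N = N - 1}"
  have R: "?R = (\<lambda>j. j * N + (N - 1)) ` {..<m}"
  proof (intro set_eqI iffI)
    fix e assume "e \<in> ?R"
    then have "e = e div N * N + (N - 1)" "e div N < m"
      by (auto simp: less_mult_imp_div_less) (metis div_mult_mod_eq)
    then show "e \<in> (\<lambda>j. j * N + (N - 1)) ` {..<m}"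
      by blast
  next
    fix e assume "e \<in> (\<lambda>j. j * N + (N - 1)) ` {..<m}"
    then obtain j where "j < m" "e = j * N + (N - 1)"
      by blast
    moreover have "j * N + N \<le> m * N"
      using \<open>j < m\<close> by (metis Suc_leI mult_Suc mult_le_mono1 add.commute)
    ultimately show "e \<in> ?R"
      using N_ge_2 mult_add_pred_mod_eq[of N j] by auto
  qed
  have "inj (\<lambda>j. j * N + (N - 1))"
  proof (rule injI)
    fix x y assume "x * N + (N - 1) = y * N + (N - 1)"
    then have "x * N = y * N"
      by (rule add_right_imp_eq)
    then show "x = y"
      using N_ge_2 by simp
  qed
  then have "card ?R = m"
    unfolding R by (simp add: card_image inj_on_subset)
  have "exps = {..<m * N} - ?R"
    by (auto simp: exps_def)
  also have "card \<dots> = m * N - m"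
    using \<open>card ?R = m\<close> by (subst card_Diff_subset) auto
  finally show ?thesis
    by (simp add: diff_mult_distrib2)
qed

lemma coeff_message_poly: "coeff (message_poly u) e = (if e \<in> exps then u e else 0)"
  by (simp add: message_poly_def coeff_sum coeff_monom finite_exps)

lemma degree_message_poly: "degree (message_poly u) + 2 \<le> m * N"
proof -
  have deg: "degree (monom (u e) e) \<le> m * N - 2" if "e \<in> exps" for e
    using degree_monom_le[of "u e" e] exps_bound[OF that] by linarith
  have "degree (message_poly u) \<le> m * N - 2"
    unfolding message_poly_def by (rule degree_sum_le[OF finite_exps]) (use deg in blast)
  moreover have "2 * 2 \<le> m * N"
    using m_ge_2 N_ge_2 by (intro mult_le_mono)
  ultimately show ?thesis
    by linarith
qed

lemma message_poly_coeff:
  assumes "\<And>e. coeff f e \<noteq> 0 \<Longrightarrow> e \<in> exps"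
  shows "message_poly (coeff f) = f"
  unfolding message_poly_def by (rule sum_monom_coeff_eq[OF finite_exps assms])

lemma p_power_mem: "i < n \<Longrightarrow> p i ^ N \<in> Ys"
  using p_bij by (auto simp: bij_betw_def)

lemma p_nonzero: "i < n \<Longrightarrow> p i \<noteq> 0"
  using p_power_mem Ys_nonzero_powers N_ge_2 by (fastforce simp: nonzero_powers_def power_0_left)

lemma card_roots: "card {h::'a. h ^ N = 1} = N"
  using N_ge_2 N_dvd_card by (intro card_roots_of_unity) auto

lemma card_points: "card {b. b ^ N \<in> Ys} = n"
  using bij_betw_same_card[OF p_bij] by simp

lemma card_Ys: "card Ys * N = n"
  using card_power_preimage[OF Ys_nonzero_powers] card_roots card_points by simp

lemma m_le_card_Ys: "m \<le> card Ys"
proof -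
  have "m * N \<le> card Ys * N"
    using card_Ys mN_le_n by simp
  then show ?thesis
    using N_ge_2 by simp
qed

lemma card_fiber:
  assumes "y \<in> Ys"
  shows "card {b. b ^ N = y} = N"
proof -
  obtain a where "a \<noteq> 0" "y = a ^ N"
    using assms Ys_nonzero_powers by (auto simp: nonzero_powers_def)
  then show ?thesis
    using card_power_fiber[OF \<open>a \<noteq> 0\<close>, of N] card_roots by simp
qed

lemma encode_apply: "encode u i = (if i < n then \<Sum>e\<in>exps. u e * p i ^ Suc e else 0)"
  by (simp add: encode_def message_poly_def poly_sum poly_monom sum_distrib_left mult_ac)

lemma sum_basis_words: "(\<Sum>e\<in>exps. scale_vec (u e) (basis_word e)) = encode u"
  by (rule ext) (simp add: sum_apply scale_vec_def basis_word_def encode_apply)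

lemma encode_indicator:
  assumes "e \<in> exps"
  shows "encode (\<lambda>x. if x = e then 1 else 0) = basis_word e"
proof
  fix i
  have "(\<Sum>x\<in>exps. (if x = e then 1 else 0) * p i ^ Suc x) = (\<Sum>x\<in>exps. if x = e then p i ^ Suc x else 0)"
    by (rule sum.cong) auto
  then show "encode (\<lambda>x. if x = e then 1 else 0) i = basis_word e i"
    using assms finite_exps by (simp add: encode_apply basis_word_def)
qed

lemma encode_diff: "encode u - encode v = encode (\<lambda>e. u e - v e)"
  by (rule ext) (simp add: encode_apply sum_subtractf algebra_simps)

lemma weight_encode:
  assumes "\<exists>e\<in>exps. u e \<noteq> 0"
  shows "n + 2 - m * N \<le> card {i. i < n \<and> encode u i \<noteq> 0}"
proof -
  have "message_poly u \<noteq> 0"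
    using assms by (auto simp: poly_eq_iff coeff_message_poly)
  then have "n - degree (message_poly u) \<le> card {i\<in>{0..<n}. poly (message_poly u) (p i) \<noteq> 0}"
    using card_nonroots_ge[of "message_poly u" p "{0..<n}"] p_bij by (simp add: bij_betw_def)
  also have "{i\<in>{0..<n}. poly (message_poly u) (p i) \<noteq> 0} = {i. i < n \<and> encode u i \<noteq> 0}"
    using p_nonzero by (auto simp: encode_def)
  finally show ?thesis
    using degree_message_poly[of u] by linarith
qed

lemma encode_neq_0:
  assumes "\<exists>e\<in>exps. u e \<noteq> 0"
  shows "encode u \<noteq> 0"
proof
  assume "encode u = 0"
  then have "card {i. i < n \<and> encode u i \<noteq> 0} = 0"
    by simp
  with weight_encode[OF assms] mN_le_n show False
    by linarith
qed

lemma inj_on_basis_word: "inj_on basis_word exps"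
proof
  fix e e' assume e: "e \<in> exps" "e' \<in> exps" "basis_word e = basis_word e'"
  define u :: "nat \<Rightarrow> 'a" where "u = (\<lambda>x. (if x = e then 1 else 0) - (if x = e' then 1 else 0))"
  have "encode u = basis_word e - basis_word e'"
    unfolding u_def
    using encode_diff[of "\<lambda>x. if x = e then 1 else 0" "\<lambda>x. if x = e' then 1 else 0"] e(1,2)
    by (simp add: encode_indicator)
  then have "\<not> (\<exists>x\<in>exps. u x \<noteq> 0)"
    using e(3) encode_neq_0 by auto
  then show "e = e'"
    using e(1) by (auto simp: u_def split: if_splits)
qed

lemma sum_basis_words_reindex:
  "(\<Sum>v\<in>basis_word ` exps. scale_vec (w v) v) = encode (\<lambda>e. w (basis_word e))"
  by (simp add: sum.reindex[OF inj_on_basis_word] o_def sum_basis_words)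

lemma independent_basis_words: "vs.independent (basis_word ` exps)"
proof
  assume "vs.dependent (basis_word ` exps)"
  then obtain w where w: "\<exists>v\<in>basis_word ` exps. w v \<noteq> 0"
    "(\<Sum>v\<in>basis_word ` exps. scale_vec (w v) v) = 0"
    using vs.dependent_finite[OF finite_imageI[OF finite_exps]] by blast
  from w(1) have "encode (\<lambda>e. w (basis_word e)) \<noteq> 0"
    by (intro encode_neq_0) blast
  with w(2) show False
    by (simp add: sum_basis_words_reindex)
qed

lemma code_eq_range_encode: "code = range encode"
proof
  show "code \<subseteq> range encode"
    unfolding code_def vs.span_finite[OF finite_imageI[OF finite_exps]]
    by (auto simp: sum_basis_words_reindex)
  show "range encode \<subseteq> code"
  proof
    fix c assume "c \<in> range encode"
    then obtain u where "c = (\<Sum>e\<in>exps. scale_vec (u e) (basis_word e))"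
      by (auto simp: sum_basis_words)
    then show "c \<in> code"
      unfolding code_def by (auto intro!: vs.span_sum vs.span_scale intro: vs.span_base)
  qed
qed

lemma code_dim_code: "code_dim code = m * (N - 1)"
  using vs.dim_span_eq_card_independent[OF independent_basis_words]
    card_image[OF inj_on_basis_word] card_exps
  by (simp add: code_dim_def code_def)

lemma linear_code_code: "linear_code n code"
  unfolding linear_code_def
proof
  show "code \<subseteq> words n"
    by (auto simp: code_eq_range_encode words_def encode_apply)
  show "vs.subspace code"
    unfolding code_def by (rule vs.subspace_span)
qed

lemma hamming_dist_ge:
  assumes "c \<in> code" and "c' \<in> code" and "c \<noteq> c'"
  shows "n + 2 - m * N \<le> hamming_dist n c c'"
proof -
  obtain u u' where u: "c = encode u" "c' = encode u'"
    using assms(1,2) code_eq_range_encode by auto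
  have "\<exists>e\<in>exps. u e - u' e \<noteq> 0"
  proof (rule ccontr)
    assume "\<not> ?thesis"
    then have "encode u = encode u'"
      by (auto simp: encode_apply intro!: sum.cong)
    with u assms(3) show False
      by simp
  qed
  then have "n + 2 - m * N \<le> card {i. i < n \<and> encode (\<lambda>e. u e - u' e) i \<noteq> 0}"
    by (rule weight_encode)
  also have "{i. i < n \<and> encode (\<lambda>e. u e - u' e) i \<noteq> 0} = {i. i < n \<and> c i \<noteq> c' i}"
    by (auto simp: u encode_diff[symmetric])
  finally show ?thesis
    by (simp add: hamming_dist_def)
qed

lemma bij_betw_fiber_nodes:
  assumes "y \<in> Ys"
  shows "bij_betw p {j. j < n \<and> p j ^ N = y} {b. b ^ N = y}"
proof -
  have "bij_betw p {j \<in> {0..<n}. p j ^ N = y} {b \<in> {b. b ^ N \<in> Ys}. b ^ N = y}"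
    by (rule bij_betw_Collect[OF p_bij]) simp
  moreover have "{j \<in> {0..<n}. p j ^ N = y} = {j. j < n \<and> p j ^ N = y}"
    by auto
  moreover have "{b \<in> {b. b ^ N \<in> Ys}. b ^ N = y} = {b. b ^ N = y}"
    using assms by auto
  ultimately show ?thesis
    by simp
qed

lemma sum_fiber_nodes_eq_0:
  assumes "c \<in> code" and "y \<in> Ys"
  shows "(\<Sum>j | j < n \<and> p j ^ N = y. c j) = 0"
proof -
  obtain u where c: "c = encode u"
    using assms(1) code_eq_range_encode by auto
  obtain a where a: "a \<noteq> 0" "y = a ^ N"
    using assms(2) Ys_nonzero_powers by (auto simp: nonzero_powers_def)
  have "(\<Sum>j | j < n \<and> p j ^ N = y. c j) = (\<Sum>j | j < n \<and> p j ^ N = y. \<Sum>e\<in>exps. u e * p j ^ Suc e)"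
    by (rule sum.cong) (auto simp: c encode_apply)
  also have "\<dots> = (\<Sum>e\<in>exps. u e * (\<Sum>j | j < n \<and> p j ^ N = y. p j ^ Suc e))"
    unfolding sum_distrib_left by (rule sum.swap)
  also have "\<dots> = (\<Sum>e\<in>exps. u e * (\<Sum>b | b ^ N = y. b ^ Suc e))"
  proof (rule sum.cong[OF refl])
    fix e
    show "u e * (\<Sum>j | j < n \<and> p j ^ N = y. p j ^ Suc e) = u e * (\<Sum>b | b ^ N = y. b ^ Suc e)"
      using sum.reindex_bij_betw[OF bij_betw_fiber_nodes[OF assms(2)], of "\<lambda>b. b ^ Suc e"]
      by simp
  qed
  also have "\<dots> = 0"
    using sum_power_fiber_eq_0[OF a(1) card_roots] not_dvd_Suc_exp by (simp add: a(2) del: power_Suc)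
  finally show ?thesis .
qed

lemma addition_based_repair_code: "addition_based_repair n code (N - 1)"
  unfolding addition_based_repair_def
proof (intro allI impI)
  fix i assume "i < n"
  define K where "K = {j. j < n \<and> p j ^ N = p i ^ N}"
  have "i \<in> K" "finite K"
    using \<open>i < n\<close> by (auto simp: K_def)
  have "card K = N"
    using bij_betw_same_card[OF bij_betw_fiber_nodes] card_fiber p_power_mem[OF \<open>i < n\<close>]
    by (simp add: K_def)
  show "\<exists>J. J \<subseteq> {..<n} - {i} \<and> card J \<le> N - 1 \<and> (\<forall>c\<in>code. c i + (\<Sum>j\<in>J. c j) = 0)"
  proof (intro exI[of _ "K - {i}"] conjI ballI)
    show "K - {i} \<subseteq> {..<n} - {i}"
      by (auto simp: K_def)
    show "card (K - {i}) \<le> N - 1"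
      using \<open>card K = N\<close> \<open>i \<in> K\<close> by simp
    fix c assume "c \<in> code"
    then have "(\<Sum>j\<in>K. c j) = 0"
      unfolding K_def using p_power_mem[OF \<open>i < n\<close>] by (rule sum_fiber_nodes_eq_0)
    then show "c i + (\<Sum>j\<in>K - {i}. c j) = 0"
      using \<open>i \<in> K\<close> \<open>finite K\<close> by (simp add: sum.remove)
  qed
qed

lemma support_in_exps:
  fixes P Q :: "'a poly"
  assumes "\<And>e. coeff P e \<noteq> 0 \<Longrightarrow> N dvd e"
    and "degree P \<le> (m - 1) * N" and "degree Q \<le> N - 2"
    and "coeff (P * Q) e \<noteq> 0"
  shows "e \<in> exps"
proof -
  obtain i where i: "i \<le> e" "coeff P i \<noteq> 0" "coeff Q (e - i) \<noteq> 0"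
    using assms(4) by (rule coeff_mult_neq_0E)
  obtain j where j: "i = j * N"
    using assms(1)[OF i(2)] by (metis dvdE mult.commute)
  have "e - i \<le> N - 2"
    using le_degree[OF i(3)] assms(3) by linarith
  moreover have "i \<le> (m - 1) * N"
    using le_degree[OF i(2)] assms(2) by linarith
  moreover have "(m - 1) * N + N = m * N"
    using m_ge_2 by (cases m) auto
  ultimately have "e < m * N"
    using i(1) N_ge_2 by linarith
  have "e mod N = (j * N + (e - i)) mod N"
    using i(1) j by simp
  also have "\<dots> = e - i"
    using \<open>e - i \<le> N - 2\<close> N_ge_2 by (simp only: mod_mult_self3) simp
  finally show ?thesis
    using \<open>e < m * N\<close> \<open>e - i \<le> N - 2\<close> N_ge_2 by (simp add: exps_def)
qed

lemma card_nodes_outside: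
  assumes "Z \<subseteq> {b. b ^ N \<in> Ys}"
  shows "card {i. i < n \<and> p i \<notin> Z} = n - card Z"
proof -
  have "bij_betw p {i \<in> {0..<n}. p i \<notin> Z} {b \<in> {b. b ^ N \<in> Ys}. b \<notin> Z}"
    by (rule bij_betw_Collect[OF p_bij]) simp
  then have "card {i. i < n \<and> p i \<notin> Z} = card ({b. b ^ N \<in> Ys} - Z)"
    by (auto dest: bij_betw_same_card simp: set_diff_eq)
  also have "\<dots> = n - card Z"
    using assms card_points by (simp add: card_Diff_subset)
  finally show ?thesis .
qed

lemma exists_vanishing_poly:
  obtains f Z where "\<And>e. coeff f e \<noteq> 0 \<Longrightarrow> e \<in> exps"
    and "Z \<subseteq> {b. b ^ N \<in> Ys}" and "card Z = m * N - 2"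
    and "\<And>b. poly f b = 0 \<longleftrightarrow> b \<in> Z"
proof -
  have "Suc (m - 1) \<le> card Ys"
    using m_le_card_Ys m_ge_2 by simp
  then obtain Y1 y where Y1: "Y1 \<subseteq> Ys" "card Y1 = m - 1" and y: "y \<in> Ys" "y \<notin> Y1"
    by (rule obtain_subset_and_point_outside)
  have "N - 2 \<le> card {b. b ^ N = y}"
    using card_fiber[OF y(1)] by simp
  then obtain B where B: "B \<subseteq> {b. b ^ N = y}" "card B = N - 2"
    by (rule obtain_subset_with_card_n)
  define P where "P = (\<Prod>z\<in>Y1. monom 1 N - [:z:])"
  define Q where "Q = (\<Prod>\<beta>\<in>B. [:-\<beta>, 1:])"
  have "coeff P e \<noteq> 0 \<Longrightarrow> N dvd e" for e
    unfolding P_def by (rule dvd_coeff_prod) (auto simp: coeff_monom coeff_pCons' split: if_splits)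
  moreover have "degree P \<le> (m - 1) * N"
    unfolding P_def Y1(2)[symmetric]
    by (rule degree_prod_le_card_mult) (auto intro: degree_diff_le simp: degree_monom_le)
  moreover have "degree Q \<le> N - 2"
    using degree_prod_le_card_mult[of B "\<lambda>\<beta>. [:-\<beta>, 1:]" 1] B(2) by (simp add: Q_def)
  ultimately have "coeff (P * Q) e \<noteq> 0 \<Longrightarrow> e \<in> exps" for e
    by (rule support_in_exps)
  moreover have "{b. b ^ N \<in> Y1} \<union> B \<subseteq> {b. b ^ N \<in> Ys}"
    using Y1(1) B(1) y(1) by auto
  moreover have "card ({b. b ^ N \<in> Y1} \<union> B) = m * N - 2"
  proof -
    have "card {b. b ^ N \<in> Y1} = (m - 1) * N"
      using card_power_preimage[of Y1] Y1 Ys_nonzero_powers card_roots by auto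
    moreover have "{b. b ^ N \<in> Y1} \<inter> B = {}"
      using B(1) y(2) by auto
    moreover have "(m - 1) * N + (N - 2) = m * N - 2"
      using m_ge_2 N_ge_2 by (cases m) auto
    ultimately show ?thesis
      using B(2) by (simp add: card_Un_disjoint)
  qed
  moreover have "poly (P * Q) b = 0 \<longleftrightarrow> b \<in> {b. b ^ N \<in> Y1} \<union> B" for b
    by (simp add: P_def Q_def poly_prod poly_monom)
  ultimately show thesis
    by (rule that)
qed

lemma exists_codeword_of_min_weight:
  obtains c where "c \<in> code" "c \<noteq> 0" "card {i. i < n \<and> c i \<noteq> 0} = n + 2 - m * N"
proof -
  obtain f Z where f: "\<And>e. coeff f e \<noteq> 0 \<Longrightarrow> e \<in> exps"
    and Z: "Z \<subseteq> {b. b ^ N \<in> Ys}" "card Z = m * N - 2" and roots: "\<And>b. poly f b = 0 \<longleftrightarrow> b \<in> Z"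
    using exists_vanishing_poly by blast
  define c where "c = encode (coeff f)"
  have "{i. i < n \<and> c i \<noteq> 0} = {i. i < n \<and> p i \<notin> Z}"
    using p_nonzero by (auto simp: c_def encode_def message_poly_coeff[OF f] roots)
  then have "card {i. i < n \<and> c i \<noteq> 0} = n + 2 - m * N"
    using card_nodes_outside[OF Z(1)] Z(2) degree_message_poly[of "\<lambda>_. 0"] by simp
  moreover have "c \<noteq> 0"
  proof
    assume "c = 0"
    with \<open>card {i. i < n \<and> c i \<noteq> 0} = n + 2 - m * N\<close> mN_le_n show False
      by simp
  qed
  moreover have "c \<in> code"
    by (simp add: c_def code_eq_range_encode)
  ultimately show thesis
    using that by blast
qed

lemma min_distance_code: "min_distance n code (n + 2 - m * N)"
  unfolding min_distance_def
proof (intro conjI ballI impI)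
  obtain c where c: "c \<in> code" "c \<noteq> 0" "card {i. i < n \<and> c i \<noteq> 0} = n + 2 - m * N"
    by (rule exists_codeword_of_min_weight)
  moreover have "0 \<in> code"
    unfolding code_def by (rule vs.span_zero)
  ultimately show "\<exists>c\<in>code. \<exists>c'\<in>code. c \<noteq> c' \<and> hamming_dist n c c' = n + 2 - m * N"
    by (intro bexI[of _ c] bexI[of _ 0]) (auto simp: hamming_dist_def)
qed (rule hamming_dist_ge)

end

theorem theorem5:
  fixes q n k r :: nat and t :: int
  assumes "card (UNIV :: 'a set) = q"
    and "n < q"
    and "0 < r" and "r < k" and "k \<le> n"
    and "r dvd k" and "(r + 1) dvd n" and "(r + 1) dvd (q - 1)"
    and "t = int n - int k - int (k div r)"
    and "t \<ge> 0"
  shows "\<exists>C :: (nat \<Rightarrow> 'a::{finite,field}) set.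
           linear_code n C \<and> code_dim C = k \<and> min_distance n C (nat t + 2) \<and>
           addition_based_repair n C r \<and> all_symbol_locality n C r"
proof -
  define N m where "N = r + 1" and "m = k div r"
  have k: "k = m * r"
    using assms(6) by (simp add: m_def)
  have "m \<ge> 2"
  proof (rule ccontr)
    assume "\<not> m \<ge> 2"
    then have "m * r \<le> 1 * r"
      by (intro mult_le_mono1) simp
    with k assms(4) show False
      by simp
  qed
  have mN: "m * N = k + m"
    by (simp add: N_def k)
  have "k + m \<le> n"
    using assms(9,10) unfolding m_def by linarith
  then have "t = int (n - (k + m))"
    using assms(9) by (simp add: m_def of_nat_diff)
  then have distance: "n + 2 - m * N = nat t + 2"
    using \<open>k + m \<le> n\<close> by (simp add: mN)
  obtain Ys :: "'a set" and p where "Ys \<subseteq> nonzero_powers N" "bij_betw p {0..<n} {b. b ^ N \<in> Ys}"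
    using exists_evaluation_points[of N n] assms(1,2,7,8) by (auto simp: N_def)
  then interpret lrc_construction n N m Ys p
    using \<open>m \<ge> 2\<close> \<open>k + m \<le> n\<close> assms(1,3,8) by unfold_locales (simp_all add: N_def k)
  show ?thesis
    using linear_code_code code_dim_code min_distance_code addition_based_repair_code
      addition_based_repair_imp_all_symbol_locality k distance
    by (intro exI[of _ code]) (simp add: N_def)
qed

end
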